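(* For $n,m\in\mathbb{N}$ and $i\in I_{nm}$ one has $h_n(\sigma_{m,n}(i))=\sigma_{m,n}(h_{nm}(i))$.
   Context: $\Gamma_0(N)=\{\begin{pmatrix}a&b\\c&d\end{pmatrix}\in SL(2,\mathbb{Z}):N\mid c\}$. $I_N=\{[x:y]_N:\gcd(x,y,N)=1\}$, $[x:y]_N$ the class of $(x,y)$ under $(x,y)\sim(kx,ky)\bmod N$, $\gcd(k,N)=1$; the right coset $\Gamma_0(N)\begin{pmatrix}a&b\\c&d\end{pmatrix}$ is identified with $[c:d]_N\in I_N$, and $R_i^{N,1}$ denotes a representative of coset $i$. $\sigma_{m,n}:I_{nm}\to I_n$ is the projection $[x:y]_{nm}\mapsto[x:y]_n$ (induced by $\Gamma_0(nm)g\mapsto\Gamma_0(n)g$). For $i\in I_N$, $A_i=\begin{pmatrix}c&b\\0&N/c\end{pmatrix}$ where $(c,b)$ (with $c\ge1$, $c\mid N$, $0\le b\le N/c-1$, $\gcd(c,b,N/c)=1$) is the pair mapped to $i$ by $(c,b)\mapsto[c:d_N(c,b)]_N$, $d_N(c,b)=\min_{0\le k\le c-1}\{c+b+kN/c:\gcd(c,b+kN/c)=1\}$ (a bijection). $h_N:I_N\to I_N$ sends $i$ to the unique $l\in I_N$ with $\begin{pmatrix}0&1\\-N&0\end{pmatrix}R_i^{N,1}\in SL(2,\mathbb{Z})A_l$. *)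

theory Defs
  imports Main
begin

text \<open>2x2 integer matrices  M2 a b c d  =  (a b; c d).\<close>
datatype mat2 = M2 int int int int

fun mmul :: "mat2 \<Rightarrow> mat2 \<Rightarrow> mat2" where
  "mmul (M2 a b c d) (M2 a' b' c' d') =
     M2 (a*a' + b*c') (a*b' + b*d') (c*a' + d*c') (c*b' + d*d')"

definition SL2 :: "mat2 set" where
  "SL2 = {M2 a b c d | a b c d. a*d - b*c = 1}"

text \<open>The class [x:y]_N: all (kx mod N, ky mod N) with gcd(k,N)=1.\<close>
definition pclass :: "nat \<Rightarrow> int \<Rightarrow> int \<Rightarrow> (int \<times> int) set" where
  "pclass N x y = {((k*x) mod int N, (k*y) mod int N) | k. coprime k (int N)}"

definition I_set :: "nat \<Rightarrow> (int \<times> int) set set" where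
  "I_set N = {pclass N x y | x y. gcd (gcd x y) (int N) = 1}"

text \<open>sigma_{m,n} : I_{nm} \<rightarrow> I_n, [x:y]_{nm} \<mapsto> [x:y]_n.\<close>
definition sigma :: "nat \<Rightarrow> nat \<Rightarrow> (int \<times> int) set \<Rightarrow> (int \<times> int) set" where
  "sigma m n i = (THE j. \<exists>x y. i = pclass (n*m) x y \<and> j = pclass n x y)"

text \<open>Right coset Gamma_0(N) g, g = (a b; c d), is identified with [c:d]_N.\<close>
fun coset_class :: "nat \<Rightarrow> mat2 \<Rightarrow> (int \<times> int) set" where
  "coset_class N (M2 a b c d) = pclass N c d"

definition rep :: "nat \<Rightarrow> (int \<times> int) set \<Rightarrow> mat2" where
  "rep N i = (SOME R. R \<in> SL2 \<and> coset_class N R = i)"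

definition pairs :: "nat \<Rightarrow> (nat \<times> nat) set" where
  "pairs N = {(c, b). c \<ge> 1 \<and> c dvd N \<and> b < N div c \<and> gcd (gcd c b) (N div c) = 1}"

definition dN :: "nat \<Rightarrow> nat \<Rightarrow> nat \<Rightarrow> nat" where
  "dN N c b = Min {c + b + k * (N div c) | k. k \<le> c - 1 \<and> coprime c (b + k * (N div c))}"

definition A_mat :: "nat \<Rightarrow> (int \<times> int) set \<Rightarrow> mat2" where
  "A_mat N i = (THE M. \<exists>c b. (c, b) \<in> pairs N \<and> pclass N (int c) (int (dN N c b)) = i
                  \<and> M = M2 (int c) (int b) 0 (int (N div c)))"

definition W :: "nat \<Rightarrow> mat2" where
  "W N = M2 0 1 (- int N) 0"

definition h :: "nat \<Rightarrow> (int \<times> int) set \<Rightarrow> (int \<times> int) set" where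
  "h N i = (THE l. l \<in> I_set N \<and> (\<exists>\<gamma>\<in>SL2. mmul (W N) (rep N i) = mmul \<gamma> (A_mat N l)))"

end

theory Submission
  imports Defs
begin

(* On classes, h_N is [x:y]_N |-> [x:x+y]_N, which visibly commutes with reduction modulo n.
   If R = (p q; r s) represents [x:y]_N then W_N R = (r s; -Np -Nq), and an equation
   W_N R = gamma A_l with A_l = (c b; 0 N/c) says that (r, s) = g (c, b) + g' (0, N/c) for
   integers g, g'.  As d_N(c,b) is congruent to c + b modulo N/c, such a gamma in SL(2,Z)
   exists iff l = [c : d_N(c,b)]_N equals [r : r + s]_N = [x : x + y]_N.  Classes of pairs
   primitive modulo N are compared by the criterion [x:y]_N = [x':y']_N iff N | x y' - x' y,
   and the arithmetic input is that gcd(c, b, D) = 1 makes c coprime to some b + k D. *)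

section \<open>Classes of pairs modulo N\<close>

definition prim_mod :: "nat \<Rightarrow> int \<Rightarrow> int \<Rightarrow> bool" where
  "prim_mod N x y \<longleftrightarrow> gcd (gcd x y) (int N) = 1"

lemma I_setI: "prim_mod N x y \<Longrightarrow> pclass N x y \<in> I_set N"
  unfolding I_set_def prim_mod_def by (intro CollectI exI conjI) (rule refl)

lemma I_setE:
  assumes "i \<in> I_set N"
  obtains x y where "i = pclass N x y" "prim_mod N x y"
  using assms unfolding I_set_def prim_mod_def by auto

lemma prim_mod_add_right [simp]: "prim_mod N x (x + y) \<longleftrightarrow> prim_mod N x y"
  unfolding prim_mod_def by simp

lemma coprime_imp_prim_mod: "coprime x y \<Longrightarrow> prim_mod N x y"
  unfolding prim_mod_def by (simp add: coprime_iff_gcd_eq_1)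

lemma prim_mod_dvd_modulus:
  assumes "d dvd N" and "prim_mod N x y"
  shows "prim_mod d x y"
proof -
  have "gcd (gcd x y) (int d) dvd gcd (gcd x y) (int N)"
    using assms(1) by (meson dvd_trans gcd_dvd1 gcd_dvd2 gcd_greatest int_dvd_int_iff)
  then show ?thesis
    using assms(2) unfolding prim_mod_def by simp
qed

lemma pclass_mem_self: "(x mod int N, y mod int N) \<in> pclass N x y"
  unfolding pclass_def by (rule CollectI, rule exI[of _ 1]) simp

lemma pclass_subset_scale:
  assumes "coprime t (int N)" and "int N dvd x' - t * x" and "int N dvd y' - t * y"
  shows "pclass N x' y' \<subseteq> pclass N x y"
proof
  fix z assume "z \<in> pclass N x' y'"
  then obtain k where k: "coprime k (int N)" and z: "z = ((k * x') mod int N, (k * y') mod int N)"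
    unfolding pclass_def by blast
  have "int N dvd k * x' - (k * t) * x" "int N dvd k * y' - (k * t) * y"
    using dvd_mult[OF assms(2), of k] dvd_mult[OF assms(3), of k] by (simp_all add: algebra_simps)
  then have "z = ((k * t * x) mod int N, (k * t * y) mod int N)"
    using z by (simp add: mod_eq_dvd_iff)
  moreover have "coprime (k * t) (int N)"
    using k assms(1) by simp
  ultimately show "z \<in> pclass N x y"
    unfolding pclass_def by blast
qed

lemma pclass_eqE:
  assumes "pclass N x y = pclass N x' y'"
  obtains t where "coprime t (int N)" "int N dvd x' - t * x" "int N dvd y' - t * y"
proof -
  have "(x' mod int N, y' mod int N) \<in> pclass N x y"
    using assms pclass_mem_self by simp
  then show ?thesis
    using that unfolding pclass_def by (auto simp: mod_eq_dvd_iff)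
qed

lemma pclass_eq_imp_cross_dvd:
  assumes "pclass N x y = pclass N x' y'"
  shows "int N dvd x * y' - x' * y"
proof -
  obtain t where "int N dvd x' - t * x" "int N dvd y' - t * y"
    using assms by (rule pclass_eqE)
  moreover have "x * y' - x' * y = x * (y' - t * y) - y * (x' - t * x)"
    by (simp add: algebra_simps)
  ultimately show ?thesis
    by simp
qed

lemma pclass_eq_imp_gcd_fst_eq:
  assumes "pclass N x y = pclass N x' y'"
  shows "gcd x (int N) = gcd x' (int N)"
proof -
  obtain t where t: "coprime t (int N)" "int N dvd x' - t * x"
    using assms by (rule pclass_eqE)
  then have "gcd x' (int N) = gcd (t * x) (int N)"
    by (metis gcd_red_int mod_eq_dvd_iff)
  also have "\<dots> = gcd x (int N)"
    using t(1) by (simp add: gcd_mult_left_left_cancel coprime_commute)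
  finally show ?thesis
    by simp
qed

lemma prim_mod_scale:
  assumes "coprime t (int N)" and "int N dvd x' - t * x" and "int N dvd y' - t * y"
    and "prim_mod N x y"
  shows "prim_mod N x' y'"
proof -
  define g where "g = gcd (gcd x' y') (int N)"
  have g: "g dvd x'" "g dvd y'" "g dvd int N"
    unfolding g_def by (meson dvd_trans gcd_dvd1 gcd_dvd2)+
  have "coprime g t"
    using coprime_divisors[OF g(3) dvd_refl assms(1)[unfolded coprime_commute[of t]]] .
  moreover have "g dvd t * x" "g dvd t * y"
    using g dvd_trans[OF g(3) assms(2)] dvd_trans[OF g(3) assms(3)]
    by (simp_all add: dvd_diff_right_iff)
  ultimately have "g dvd gcd (gcd x y) (int N)"
    using g(3) by (simp add: coprime_dvd_mult_right_iff)
  then show ?thesis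
    using assms(4) unfolding prim_mod_def g_def by simp
qed

lemma pclass_eq_imp_prim_mod:
  assumes "pclass N x y = pclass N x' y'" and "prim_mod N x y"
  shows "prim_mod N x' y'"
proof -
  obtain t where "coprime t (int N)" "int N dvd x' - t * x" "int N dvd y' - t * y"
    using assms(1) by (rule pclass_eqE)
  then show ?thesis
    using assms(2) by (rule prim_mod_scale)
qed

lemma pclass_subset_of_cross_dvd:
  assumes "prim_mod N x y" and "prim_mod N x' y'" and cross: "int N dvd x * y' - x' * y"
  shows "pclass N x' y' \<subseteq> pclass N x y"
proof -
  obtain u0 w where u0w: "u0 * gcd x y + w * int N = 1"
    using bezout_int[of "gcd x y" "int N"] assms(1) unfolding prim_mod_def by auto
  obtain u1 v1 where u1v1: "u1 * x + v1 * y = gcd x y"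
    using bezout_int by blast
  define u v where "u = u0 * u1" and "v = u0 * v1"
  have "u * x + v * y = u0 * (u1 * x + v1 * y)"
    unfolding u_def v_def by (simp add: algebra_simps)
  then have uv: "u * x + v * y - 1 = - w * int N"
    using u0w u1v1 by simp
  \<comment> \<open>(u, v) is a left inverse of (x, y) modulo N, so t scales (x, y) to (x', y').\<close>
  define t where "t = u * x' + v * y'"
  have "x' - t * x = - x' * (u * x + v * y - 1) - v * (x * y' - x' * y)"
       "y' - t * y = - y' * (u * x + v * y - 1) + u * (x * y' - x' * y)"
    unfolding t_def by (simp_all add: algebra_simps)
  then have tx: "int N dvd x' - t * x" and ty: "int N dvd y' - t * y"
    unfolding uv using cross by (simp_all add: dvd_mult)
  have "coprime t (int N)"
  proof (rule coprimeI)
    fix g assume g: "g dvd t" "g dvd int N"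
    have "g dvd x'" "g dvd y'"
      using g dvd_trans[OF g(2) tx] dvd_trans[OF g(2) ty] by (simp_all add: dvd_diff_left_iff)
    then have "g dvd gcd (gcd x' y') (int N)"
      using g(2) by simp
    then show "is_unit g"
      using assms(2) unfolding prim_mod_def by simp
  qed
  then show ?thesis
    using tx ty by (rule pclass_subset_scale)
qed

lemma pclass_eqI:
  assumes "prim_mod N x y" and "prim_mod N x' y'" and "int N dvd x * y' - x' * y"
  shows "pclass N x y = pclass N x' y'"
proof
  show "pclass N x' y' \<subseteq> pclass N x y"
    using assms by (rule pclass_subset_of_cross_dvd)
  show "pclass N x y \<subseteq> pclass N x' y'"
    using assms(2,1) assms(3) by (intro pclass_subset_of_cross_dvd) (simp_all add: dvd_diff_commute)
qed

lemma pclass_same_fst_eq_iff: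
  assumes "int N = c * D" and "c \<noteq> 0" and "prim_mod N c d" and "prim_mod N c d'"
  shows "pclass N c d = pclass N c d' \<longleftrightarrow> D dvd d - d'"
proof -
  have "pclass N c d = pclass N c d' \<longleftrightarrow> int N dvd c * d' - c * d"
    using pclass_eq_imp_cross_dvd pclass_eqI[OF assms(3,4)] by blast
  also have "\<dots> \<longleftrightarrow> D dvd d' - d"
    using assms(1,2) by (simp add: right_diff_distrib[symmetric])
  finally show ?thesis
    by (simp add: dvd_diff_commute)
qed

section \<open>Coprime shifts\<close>

lemma dvd_coprime_mult_power:
  fixes c b :: int
  assumes "c \<noteq> 0"
  obtains a n where "coprime a b" "c dvd a * b ^ n"
  using assms
proof (induction "nat \<bar>c\<bar>" arbitrary: c thesis rule: less_induct)
  case less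
  show ?case
  proof (cases "coprime c b")
    case True
    then show ?thesis
      using less.prems(1)[of c 0] by simp
  next
    case False
    define g where "g = gcd c b"
    have "g \<noteq> 1" "g \<ge> 0"
      using False unfolding g_def by (auto simp: coprime_iff_gcd_eq_1)
    moreover have "g \<noteq> 0"
      using less.prems(2) unfolding g_def by simp
    ultimately have "g \<ge> 2"
      by linarith
    obtain c1 where c: "c = g * c1"
      unfolding g_def by (meson dvdE gcd_dvd1)
    with less.prems(2) have "c1 \<noteq> 0"
      by auto
    have "\<bar>c\<bar> = g * \<bar>c1\<bar>"
      using c \<open>g \<ge> 0\<close> by (simp add: abs_mult)
    with \<open>g \<ge> 2\<close> \<open>c1 \<noteq> 0\<close> have "nat \<bar>c1\<bar> < nat \<bar>c\<bar>"
      by (simp add: nat_less_eq_zless)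
    then obtain a n where a: "coprime a b" "c1 dvd a * b ^ n"
      using less.hyps \<open>c1 \<noteq> 0\<close> by blast
    have "g * c1 dvd b * (a * b ^ n)"
      using a(2) unfolding g_def by (intro mult_dvd_mono) simp_all
    then have "c dvd a * b ^ Suc n"
      unfolding c by (simp add: algebra_simps)
    then show ?thesis
      using less.prems(1) a(1) by blast
  qed
qed

lemma exists_coprime_add_mult:
  fixes c b D :: int
  assumes "c \<noteq> 0" and "gcd (gcd c b) D = 1"
  shows "\<exists>k. coprime c (b + k * D)"
proof -
  \<comment> \<open>a carries the primes of c not dividing b, so each prime of c divides exactly one of b, a D.\<close>
  obtain a n where a: "coprime a b" "c dvd a * b ^ n"
    using assms(1) by (rule dvd_coprime_mult_power)
  have "gcd a (D * a + b) = gcd a b"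
    by (rule gcd_add_mult)
  then have ba: "coprime (b + a * D) a"
    using a(1) by (simp add: coprime_iff_gcd_eq_1 gcd.commute ac_simps)
  have "coprime c (b + a * D)"
  proof (rule coprimeI)
    fix g assume g: "g dvd c" "g dvd b + a * D"
    have "coprime g a"
      using coprime_divisors[OF g(2) dvd_refl ba] .
    have "coprime g b"
    proof (rule coprimeI)
      fix h assume h: "h dvd g" "h dvd b"
      have "h dvd a * D"
        using dvd_trans[OF h(1) g(2)] dvd_add_right_iff[OF h(2)] by simp
      then have "h dvd D"
        using coprime_divisors[OF h(1) dvd_refl \<open>coprime g a\<close>]
        by (simp add: coprime_dvd_mult_right_iff)
      then have "h dvd gcd (gcd c b) D"
        using h(2) dvd_trans[OF h(1) g(1)] by simp
      then show "is_unit h"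
        using assms(2) by simp
    qed
    then have "coprime g (b ^ n)"
      by simp
    moreover have "g dvd b ^ n"
      using dvd_trans[OF g(1) a(2)] \<open>coprime g a\<close> by (simp add: coprime_dvd_mult_right_iff)
    ultimately show "is_unit g"
      using coprime_common_divisor[of g "b ^ n" g] by simp
  qed
  then show ?thesis
    by blast
qed

lemma exists_coprime_add_mult_less:
  fixes c b D :: int
  assumes "c > 0" and "gcd (gcd c b) D = 1"
  shows "\<exists>k. 0 \<le> k \<and> k < c \<and> coprime c (b + k * D)"
proof -
  obtain k where k: "coprime c (b + k * D)"
    using exists_coprime_add_mult[OF _ assms(2)] assms(1) by auto
  have "b + k * D = (k div c * D) * c + (b + k mod c * D)"
    by (simp add: minus_div_mult_eq_mod[symmetric] algebra_simps)
  then have "gcd c (b + k * D) = gcd c (b + k mod c * D)"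
    by (simp only: gcd_add_mult)
  then have "coprime c (b + k mod c * D)"
    using k by (simp add: coprime_iff_gcd_eq_1)
  then show ?thesis
    using assms(1) by (intro exI[of _ "k mod c"]) simp
qed

section \<open>Coset representatives and the normal form of a class\<close>

lemma pclass_coprime_representative:
  assumes "prim_mod N x y"
  obtains x' y' where "coprime x' y'" and "pclass N x' y' = pclass N x y"
proof -
  obtain x' y' where xy': "coprime x' y'" "int N dvd x' - x" "int N dvd y' - y"
  proof (cases "x = 0")
    case True
    then have "coprime (int N) y"
      using assms unfolding prim_mod_def by (simp add: coprime_iff_gcd_eq_1 gcd.commute)
    then show ?thesis
      using True that[of "int N" y] by simp
  next
    case False
    then obtain k where "coprime x (y + k * int N)"
      using exists_coprime_add_mult[OF False, of y "int N"] assms unfolding prim_mod_def by auto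
    then show ?thesis
      using that[of x "y + k * int N"] by simp
  qed
  have "x * y' - x' * y = x * (y' - y) - y * (x' - x)"
    by (simp add: algebra_simps)
  then have "int N dvd x * y' - x' * y"
    using xy' by simp
  then have "pclass N x y = pclass N x' y'"
    using pclass_eqI[OF assms coprime_imp_prim_mod[OF xy'(1)]] by simp
  then show ?thesis
    using that xy'(1) by simp
qed

lemma rep_pclass:
  assumes "prim_mod N x y"
  shows "rep N (pclass N x y) \<in> SL2" and "coset_class N (rep N (pclass N x y)) = pclass N x y"
proof -
  obtain x' y' where xy': "coprime x' y'" "pclass N x' y' = pclass N x y"
    using assms by (rule pclass_coprime_representative)
  obtain u v where "u * x' + v * y' = 1"
    using bezout_int[of x' y'] xy'(1) by (auto simp: coprime_iff_gcd_eq_1)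
  then have "M2 v (- u) x' y' \<in> SL2"
    unfolding SL2_def by (auto simp: algebra_simps)
  moreover have "coset_class N (M2 v (- u) x' y') = pclass N x y"
    using xy'(2) by simp
  ultimately have "\<exists>R. R \<in> SL2 \<and> coset_class N R = pclass N x y"
    by blast
  then have "rep N (pclass N x y) \<in> SL2 \<and> coset_class N (rep N (pclass N x y)) = pclass N x y"
    unfolding rep_def by (rule someI_ex)
  then show "rep N (pclass N x y) \<in> SL2" and "coset_class N (rep N (pclass N x y)) = pclass N x y"
    by simp_all
qed

lemma exists_coprime_scale_to_gcd:
  assumes "N > 0"
  obtains t where "coprime t (int N)" and "int N dvd t * x - gcd x (int N)"
proof -
  define c where "c = gcd x (int N)"
  obtain x1 where x: "x = c * x1"
    using gcd_dvd1[of x "int N"] unfolding c_def by (elim dvdE)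
  obtain D where N: "int N = c * D"
    using gcd_dvd2[of x "int N"] unfolding c_def by (elim dvdE)
  have "c > 0"
    using assms unfolding c_def by simp
  have "c * gcd x1 D = gcd (c * x1) (c * D)"
    using gcd_mult_distrib_int[of c x1 D] \<open>c > 0\<close> by simp
  also have "\<dots> = c"
    by (simp only: x[symmetric] N[symmetric] c_def[symmetric])
  finally have "c * gcd x1 D = c" .
  then obtain u w where uw: "u * x1 + w * D = 1"
    using bezout_int[of x1 D] \<open>c > 0\<close> by auto
  have "gcd (gcd (int N) u) D = 1"
  proof -
    have "gcd (gcd (int N) u) D dvd u * x1 + w * D"
      by (meson dvd_add dvd_mult dvd_mult2 gcd_dvd1 gcd_dvd2 dvd_trans)
    then show ?thesis
      unfolding uw by simp
  qed
  then obtain k where k: "coprime (int N) (u + k * D)"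
    using exists_coprime_add_mult[of "int N" u D] assms by auto
  have "(u + k * D) * x - c = c * (u * x1 + w * D - 1) + int N * (k * x1 - w)"
    unfolding x N by (simp add: algebra_simps)
  then have "(u + k * D) * x - c = int N * (k * x1 - w)"
    unfolding uw by simp
  then show ?thesis
    using that[of "u + k * D"] k unfolding c_def by (simp add: coprime_commute)
qed

lemma dNE:
  assumes "(c, b) \<in> pairs N"
  obtains k where "dN N c b = c + b + k * (N div c)" and "coprime c (dN N c b)"
proof -
  define D where "D = N div c"
  have "int c > 0" and "int (gcd (gcd c b) D) = 1"
    using assms unfolding pairs_def D_def by auto
  then have "gcd (gcd (int c) (int b)) (int D) = 1"
    by (simp only: gcd_int_int_eq)
  from exists_coprime_add_mult_less[OF \<open>int c > 0\<close> this]
  obtain k0 where "0 \<le> k0" "k0 < int c" "coprime (int c) (int b + k0 * int D)"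
    by blast
  then have "nat k0 \<le> c - 1" and "coprime c (b + nat k0 * D)"
    by (auto simp flip: coprime_int_iff)
  then have "c + b + nat k0 * D \<in> {c + b + k * D | k. k \<le> c - 1 \<and> coprime c (b + k * D)}"
    by blast
  moreover have "finite {c + b + k * D | k. k \<le> c - 1 \<and> coprime c (b + k * D)}"
    by (rule finite_image_set) simp
  ultimately have "dN N c b \<in> {c + b + k * D | k. k \<le> c - 1 \<and> coprime c (b + k * D)}"
    unfolding dN_def D_def[symmetric] by (intro Min_in) auto
  then obtain k where "dN N c b = c + b + k * D" "coprime c (b + k * D)"
    by blast
  moreover have "coprime c (c + b + k * D) \<longleftrightarrow> coprime c (b + k * D)"
    by (simp add: coprime_iff_gcd_eq_1 add.assoc)
  ultimately have "dN N c b = c + b + k * (N div c)" "coprime c (dN N c b)"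
    unfolding D_def by simp_all
  then show ?thesis
    by (rule that)
qed

lemma gcd_gcd_eq_1_of_prim_mod:
  fixes c b D y :: int
  assumes "int N = c * D" and "D dvd y - (c + b)" and "prim_mod N c y"
  shows "gcd (gcd c b) D = 1"
proof -
  define g where "g = gcd (gcd c b) D"
  have g: "g dvd c" "g dvd b" "g dvd D"
    unfolding g_def by (meson dvd_trans gcd_dvd1 gcd_dvd2)+
  have "g dvd y - (c + b)"
    using g(3) assms(2) by (rule dvd_trans)
  then have "g dvd y"
    using g(1,2) dvd_diff_left_iff[of g "c + b" y] by simp
  moreover have "g dvd int N"
    unfolding assms(1) using g(1) by simp
  ultimately have "g dvd gcd (gcd c y) (int N)"
    using g(1) by simp
  then show ?thesis
    using assms(3) unfolding prim_mod_def g_def by simp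
qed

lemma pclass_eq_gcd_fst:
  assumes "N > 0" and "prim_mod N x y"
  obtains y' where "prim_mod N (gcd x (int N)) y'" and "pclass N (gcd x (int N)) y' = pclass N x y"
proof -
  obtain t where t: "coprime t (int N)" "int N dvd t * x - gcd x (int N)"
    using assms(1) by (rule exists_coprime_scale_to_gcd)
  then have prim: "prim_mod N (gcd x (int N)) (t * y)"
    using prim_mod_scale[OF t(1) _ _ assms(2)] by (simp add: dvd_diff_commute)
  moreover have "pclass N (gcd x (int N)) (t * y) = pclass N x y"
  proof (rule pclass_eqI[OF prim assms(2)])
    have "gcd x (int N) * y - x * (t * y) = - y * (t * x - gcd x (int N))"
      by (simp add: algebra_simps)
    then show "int N dvd gcd x (int N) * y - x * (t * y)"
      using t(2) by simp
  qed
  ultimately show ?thesis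
    by (rule that)
qed

lemma pairs_exists_same_fst:
  assumes "N > 0" and "c > 0" and "c dvd N" and prim: "prim_mod N (int c) y"
  obtains b where "(c, b) \<in> pairs N" and "pclass N (int c) (int (dN N c b)) = pclass N (int c) y"
proof -
  define D where "D = N div c"
  have "N = c * D"
    using assms(3) unfolding D_def by simp
  then have N: "int N = int c * int D" and "D > 0"
    using assms(1) by simp_all
  define b where "b = nat ((y - int c) mod int D)"
  have "int b = (y - int c) mod int D"
    unfolding b_def using \<open>D > 0\<close> by simp
  moreover have "(y - int c) mod int D < int D"
    using \<open>D > 0\<close> by simp
  ultimately have "b < D"
    by linarith
  have b: "int D dvd y - (int c + int b)"
    using dvd_minus_mod[of "int D" "y - int c"] \<open>int b = _\<close> by (simp add: diff_diff_eq)
  have "gcd (gcd (int c) (int b)) (int D) = 1"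
    using N b prim by (rule gcd_gcd_eq_1_of_prim_mod)
  then have "int (gcd (gcd c b) D) = 1"
    by (simp only: gcd_int_int_eq)
  then have pair: "(c, b) \<in> pairs N"
    using assms(2,3) \<open>b < D\<close> unfolding pairs_def D_def by simp
  then obtain k where k: "dN N c b = c + b + k * D" "coprime c (dN N c b)"
    unfolding D_def by (rule dNE)
  have "pclass N (int c) (int (dN N c b)) = pclass N (int c) y"
  proof (subst pclass_same_fst_eq_iff[OF N])
    show "int c \<noteq> 0" and "prim_mod N (int c) y"
      using assms(2) prim by simp_all
    show "prim_mod N (int c) (int (dN N c b))"
      using k(2) by (simp add: coprime_imp_prim_mod)
    have "int (dN N c b) - y = int k * int D - (y - (int c + int b))"
      unfolding k(1) by simp
    also have "int D dvd \<dots>"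
      using b by simp
    finally show "int D dvd int (dN N c b) - y" .
  qed
  with pair show ?thesis
    by (rule that)
qed

lemma pairs_exists:
  assumes "N > 0" and "prim_mod N x y"
  obtains c b where "(c, b) \<in> pairs N" and "pclass N (int c) (int (dN N c b)) = pclass N x y"
proof -
  define c where "c = nat (gcd x (int N))"
  have c: "int c = gcd x (int N)" "c > 0" "c dvd N"
    using assms(1) unfolding c_def by (simp_all flip: int_dvd_int_iff)
  obtain y' where prim: "prim_mod N (int c) y'" and y': "pclass N (int c) y' = pclass N x y"
    using assms unfolding c(1) by (rule pclass_eq_gcd_fst)
  from assms(1) c(2,3) prim obtain b
    where "(c, b) \<in> pairs N" "pclass N (int c) (int (dN N c b)) = pclass N (int c) y'"
    by (rule pairs_exists_same_fst)
  then show ?thesis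
    using that y' by simp
qed

lemma pairs_unique:
  assumes cb: "(c, b) \<in> pairs N" and cb': "(c', b') \<in> pairs N"
    and eq: "pclass N (int c) (int (dN N c b)) = pclass N (int c') (int (dN N c' b'))"
  shows "c = c'" and "b = b'"
proof -
  have "c dvd N" "c' dvd N" "c > 0" "b < N div c" "b' < N div c'"
    using cb cb' unfolding pairs_def by auto
  moreover have "gcd (int c) (int N) = gcd (int c') (int N)"
    using eq by (rule pclass_eq_imp_gcd_fst_eq)
  ultimately show "c = c'"
    by (simp add: gcd_nat.absorb1)
  define D where "D = N div c"
  have N: "int N = int c * int D" and "b < D" "b' < D"
    using \<open>c dvd N\<close> \<open>b < N div c\<close> \<open>b' < N div c'\<close> \<open>c = c'\<close> unfolding D_def
    by (simp_all flip: of_nat_mult)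
  obtain k where k: "dN N c b = c + b + k * D" "coprime c (dN N c b)"
    using cb unfolding D_def by (rule dNE)
  obtain k' where k': "dN N c b' = c + b' + k' * D" "coprime c (dN N c b')"
    using cb' unfolding D_def \<open>c = c'\<close>[symmetric] by (rule dNE)
  have "int D dvd int (dN N c b) - int (dN N c b')"
    using eq \<open>c = c'\<close> pclass_same_fst_eq_iff[OF N] \<open>c > 0\<close> k(2) k'(2)
    by (simp add: coprime_imp_prim_mod)
  moreover have "int (dN N c b) - int (dN N c b') = int b - int b' + (int k - int k') * int D"
    unfolding k(1) k'(1) by (simp add: algebra_simps)
  ultimately have "int b mod int D = int b' mod int D"
    by (simp add: mod_eq_dvd_iff dvd_add_left_iff)
  then show "b = b'"
    using \<open>b < D\<close> \<open>b' < D\<close> by simp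
qed

lemma A_mat_pclass_dN:
  assumes cb: "(c, b) \<in> pairs N"
  shows "A_mat N (pclass N (int c) (int (dN N c b))) = M2 (int c) (int b) 0 (int (N div c))"
  unfolding A_mat_def
proof (rule the_equality)
  show "\<exists>c' b'. (c', b') \<in> pairs N
          \<and> pclass N (int c') (int (dN N c' b')) = pclass N (int c) (int (dN N c b))
          \<and> M2 (int c) (int b) 0 (int (N div c)) = M2 (int c') (int b') 0 (int (N div c'))"
    using cb by (intro exI[of _ c] exI[of _ b]) simp
next
  fix M
  assume "\<exists>c' b'. (c', b') \<in> pairs N
            \<and> pclass N (int c') (int (dN N c' b')) = pclass N (int c) (int (dN N c b))
            \<and> M = M2 (int c') (int b') 0 (int (N div c'))"
  then obtain c' b' where c'b': "(c', b') \<in> pairs N"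
      and eq: "pclass N (int c') (int (dN N c' b')) = pclass N (int c) (int (dN N c b))"
      and M: "M = M2 (int c') (int b') 0 (int (N div c'))"
    by blast
  have "c' = c" "b' = b"
    using pairs_unique[OF c'b' cb eq] by simp_all
  then show "M = M2 (int c) (int b) 0 (int (N div c))"
    using M by simp
qed

lemma A_matE:
  assumes "N > 0" and "l \<in> I_set N"
  obtains c b d D :: int
  where "A_mat N l = M2 c b 0 D" and "l = pclass N c d" and "int N = c * D" and "c \<noteq> 0"
    and "D dvd d - (c + b)" and "coprime c d"
proof -
  obtain x y where l: "l = pclass N x y" and "prim_mod N x y"
    using assms(2) by (rule I_setE)
  with assms(1) obtain c b where cb: "(c, b) \<in> pairs N" "pclass N (int c) (int (dN N c b)) = l"
    unfolding l by (elim pairs_exists)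
  obtain k where k: "dN N c b = c + b + k * (N div c)" "coprime c (dN N c b)"
    using cb(1) by (rule dNE)
  have "c dvd N" and "c > 0"
    using cb(1) unfolding pairs_def by auto
  show ?thesis
  proof (intro that[of "int c" "int b" "int (N div c)" "int (dN N c b)"])
    show "A_mat N l = M2 (int c) (int b) 0 (int (N div c))"
      using A_mat_pclass_dN[OF cb(1)] cb(2) by simp
    show "coprime (int c) (int (dN N c b))"
      using k(2) by simp
    show "l = pclass N (int c) (int (dN N c b))"
      using cb(2) by simp
    show "int N = int c * int (N div c)"
      using \<open>c dvd N\<close> by (simp flip: of_nat_mult)
    show "int (N div c) dvd int (dN N c b) - (int c + int b)"
      unfolding k(1) by simp
  qed (use \<open>c > 0\<close> in simp)
qed

section \<open>The maps h and sigma on classes\<close>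

lemma SL2I: "a * d - b * c = 1 \<Longrightarrow> M2 a b c d \<in> SL2"
  unfolding SL2_def by (intro CollectI exI conjI) (rule refl)

lemma det_eq_1_imp_coprime:
  fixes p q r s :: int
  assumes "p * s - q * r = 1"
  shows "coprime r s"
proof (rule coprimeI)
  fix g assume "g dvd r" "g dvd s"
  then have "g dvd p * s - q * r"
    by simp
  then show "is_unit g"
    using assms by simp
qed

lemma W_mult_eq_mult_upper_imp_pclass_eq:
  fixes p q r s c b d D :: int
  assumes W: "mmul (W N) (M2 p q r s) = mmul \<gamma> (M2 c b 0 D)"
    and "coprime r s" and N: "int N = c * D" and d: "D dvd d - (c + b)" and "coprime c d"
  shows "pclass N c d = pclass N r (r + s)"
proof -
  obtain g1 g2 g3 g4 where \<gamma>: "\<gamma> = M2 g1 g2 g3 g4"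
    by (cases \<gamma>)
  have r: "r = g1 * c" and s: "s = g1 * b + g2 * D"
    using W by (simp_all add: W_def \<gamma>)
  obtain e where "d - (c + b) = D * e"
    using d by (elim dvdE)
  then have e: "d = c + b + D * e"
    by linarith
  have "c * (r + s) - r * d = c * D * (g2 - g1 * e)"
    unfolding r s e by (simp add: algebra_simps)
  then have "int N dvd c * (r + s) - r * d"
    unfolding N by simp
  then show ?thesis
    using assms(2,5) by (intro pclass_eqI) (simp_all add: coprime_imp_prim_mod)
qed

lemma pclass_eq_imp_W_mult_eq_SL2_mult_upper:
  fixes p q r s c b d D :: int
  assumes det: "p * s - q * r = 1" and N: "int N = c * D" and "c \<noteq> 0"
    and d: "D dvd d - (c + b)" and eq: "pclass N c d = pclass N r (r + s)"
  shows "\<exists>\<gamma>\<in>SL2. mmul (W N) (M2 p q r s) = mmul \<gamma> (M2 c b 0 D)"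
proof -
  obtain t where "int N dvd r - t * c"
    using eq by (rule pclass_eqE)
  then have "c dvd r - t * c"
    unfolding N by (rule dvd_mult_left)
  then have "c dvd r"
    by (simp add: dvd_diff_left_iff)
  then obtain r1 where r: "r = c * r1"
    by (elim dvdE)
  have "int N dvd c * (r + s) - r * d"
    using eq by (rule pclass_eq_imp_cross_dvd)
  then have "c * D dvd c * (r + s - r1 * d)"
    unfolding N r by (simp add: algebra_simps)
  then have "D dvd r + s - r1 * d"
    using \<open>c \<noteq> 0\<close> by simp
  have "s - r1 * b = (r + s - r1 * d) + r1 * (d - (c + b))"
    unfolding r by (simp add: algebra_simps)
  also have "D dvd \<dots>"
    using \<open>D dvd r + s - r1 * d\<close> d by simp
  finally have "D dvd s - r1 * b" .
  then obtain e where "s - r1 * b = D * e"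
    by (elim dvdE)
  then have s: "s = r1 * b + D * e"
    by linarith
  define \<gamma> where "\<gamma> = M2 r1 e (- p * D) (p * b - q * c)"
  have "r1 * (p * b - q * c) - e * (- p * D) = p * s - q * r"
    unfolding s r by (simp add: algebra_simps)
  then have "\<gamma> \<in> SL2"
    unfolding \<gamma>_def using det by (intro SL2I) simp
  moreover have "mmul (W N) (M2 p q r s) = mmul \<gamma> (M2 c b 0 D)"
    unfolding \<gamma>_def W_def N r s by (simp add: algebra_simps)
  ultimately show ?thesis
    by blast
qed

lemma W_mult_in_SL2_A_mat_iff:
  fixes p q r s :: int
  assumes "N > 0" and det: "p * s - q * r = 1"
  shows "l \<in> I_set N \<and> (\<exists>\<gamma>\<in>SL2. mmul (W N) (M2 p q r s) = mmul \<gamma> (A_mat N l))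
    \<longleftrightarrow> l = pclass N r (r + s)"
proof
  assume "l \<in> I_set N \<and> (\<exists>\<gamma>\<in>SL2. mmul (W N) (M2 p q r s) = mmul \<gamma> (A_mat N l))"
  then obtain \<gamma> where l: "l \<in> I_set N" and W: "mmul (W N) (M2 p q r s) = mmul \<gamma> (A_mat N l)"
    by blast
  obtain c b d D where "A_mat N l = M2 c b 0 D" "l = pclass N c d" "int N = c * D"
    "D dvd d - (c + b)" "coprime c d"
    using assms(1) l by (rule A_matE)
  then show "l = pclass N r (r + s)"
    using W_mult_eq_mult_upper_imp_pclass_eq W det_eq_1_imp_coprime[OF det] by simp
next
  assume l: "l = pclass N r (r + s)"
  then have "l \<in> I_set N"
    using det by (simp add: I_setI coprime_imp_prim_mod det_eq_1_imp_coprime)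
  moreover obtain c b d D where "A_mat N l = M2 c b 0 D" "l = pclass N c d" "int N = c * D"
    "c \<noteq> 0" "D dvd d - (c + b)"
    using assms(1) \<open>l \<in> I_set N\<close> by (rule A_matE)
  ultimately show "l \<in> I_set N \<and> (\<exists>\<gamma>\<in>SL2. mmul (W N) (M2 p q r s) = mmul \<gamma> (A_mat N l))"
    using pclass_eq_imp_W_mult_eq_SL2_mult_upper[OF det] l by simp
qed

lemma h_pclass:
  assumes "N > 0" and "prim_mod N x y"
  shows "h N (pclass N x y) = pclass N x (x + y)"
proof -
  obtain p q r s where R: "rep N (pclass N x y) = M2 p q r s"
    by (cases "rep N (pclass N x y)")
  have det: "p * s - q * r = 1" and rs: "pclass N r s = pclass N x y"
    using rep_pclass[OF assms(2)] unfolding R SL2_def by auto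
  have "h N (pclass N x y) = pclass N r (r + s)"
    unfolding h_def R W_mult_in_SL2_A_mat_iff[OF assms(1) det] by simp
  also have "\<dots> = pclass N x (x + y)"
  proof (rule pclass_eqI)
    show "prim_mod N r (r + s)" and "prim_mod N x (x + y)"
      using det assms(2) by (simp_all add: coprime_imp_prim_mod det_eq_1_imp_coprime)
    have "r * (x + y) - x * (r + s) = r * y - x * s"
      by (simp add: algebra_simps)
    then show "int N dvd r * (x + y) - x * (r + s)"
      using pclass_eq_imp_cross_dvd[OF rs] by simp
  qed
  finally show ?thesis .
qed

lemma sigma_pclass:
  assumes "prim_mod (n * m) x y"
  shows "sigma m n (pclass (n * m) x y) = pclass n x y"
  unfolding sigma_def
proof (rule the_equality)
  show "\<exists>x' y'. pclass (n * m) x y = pclass (n * m) x' y' \<and> pclass n x y = pclass n x' y'"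
    by (intro exI conjI) (rule refl)+
next
  fix j
  assume "\<exists>x' y'. pclass (n * m) x y = pclass (n * m) x' y' \<and> j = pclass n x' y'"
  then obtain x' y' where eq: "pclass (n * m) x y = pclass (n * m) x' y'" and j: "j = pclass n x' y'"
    by blast
  have "prim_mod n x y"
    using dvd_triv_left assms by (rule prim_mod_dvd_modulus)
  moreover have "prim_mod n x' y'"
    using dvd_triv_left pclass_eq_imp_prim_mod[OF eq assms] by (rule prim_mod_dvd_modulus)
  moreover have "int n dvd x * y' - x' * y"
    by (rule dvd_trans[OF _ pclass_eq_imp_cross_dvd[OF eq]]) simp
  ultimately have "pclass n x y = pclass n x' y'"
    by (rule pclass_eqI)
  with j show "j = pclass n x y"
    by simp
qed

theorem mainTheorem16:
  fixes n m :: nat and i :: "(int \<times> int) set"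
  assumes "n \<ge> 1" and "m \<ge> 1" and "i \<in> I_set (n * m)"
  shows "h n (sigma m n i) = sigma m n (h (n * m) i)"
proof -
  obtain x y where i: "i = pclass (n * m) x y" and prim: "prim_mod (n * m) x y"
    using assms(3) by (rule I_setE)
  have "prim_mod n x y"
    using dvd_triv_left prim by (rule prim_mod_dvd_modulus)
  then have "h n (sigma m n i) = pclass n x (x + y)"
    using assms(1) by (simp add: i sigma_pclass[OF prim] h_pclass)
  also have "\<dots> = sigma m n (h (n * m) i)"
    using assms(1,2) prim by (simp add: i h_pclass sigma_pclass)
  finally show ?thesis .
qed

end
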